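(* Let $A=(A^\bullet,d)$ be a connected, finite-dimensional commutative differential graded algebra over $\mathbb{C}$, let $\mathfrak{g}$ be a finite-dimensional complex Lie algebra, and let $\theta\colon \mathfrak{g}\to\mathfrak{gl}(V)$ be a finite-dimensional representation with $V\neq 0$. Fix a degree $i$. Suppose that $A$ has trivial resonance in degree $i$ (that is, $0$ is an isolated point of $\mathcal{R}^i_1(A)$) and that $\mathcal{F}(A,\mathfrak{g})_{(0)}=\mathcal{F}^1(A,\mathfrak{g})_{(0)}$. Then $\mathcal{R}^i_1(A,\theta)_{(0)}=\Pi(A,\theta)_{(0)}$.
   Context: A cdga $A=(A^\bullet,d)$ is a graded-commutative algebra with a degree-one differential that is a graded derivation with $d^2=0$; connected means $A^0=\mathbb{C}\cdot 1$. The variety of $\mathfrak{g}$-valued flat connections is $\mathcal{F}(A,\mathfrak{g})=\{\omega\in A^1\otimes\mathfrak{g} : d\omega+\tfrac12[\omega,\omega]=0\}$; for $\omega=\sum_k\eta_k\otimes g_k$ this equation reads $\sum_k d\eta_k\otimes g_k+\sum_{k<l}\eta_k\eta_l\otimes[g_k,g_l]=0$. For $\omega\in\mathcal{F}(A,\mathfrak{g})$, the covariant derivative $d_\omega$ on $A^\bullet\otimes V$ is $d_\omega(a\otimes v)=da\otimes v+\sum_k \eta_k a\otimes\theta(g_k)v$; it satisfies $d_\omega^2=0$. The resonance varieties are $\mathcal{R}^i_r(A,\theta)=\{\omega\in\mathcal{F}(A,\mathfrak{g}) : \dim H^i(A\otimes V,d_\omega)\ge r\}$. In the rank one case $\mathfrak{g}=\mathbb{C}$,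 $\theta=\mathrm{id}_{\mathbb{C}}$, one writes $\mathcal{R}^i_r(A)$; here $\mathcal{F}(A,\mathbb{C})=\{\eta\in A^1: d\eta=0\}=H^1(A)$. Further, $\mathcal{F}^1(A,\mathfrak{g})=\{\eta\otimes g : \eta\in A^1,\ d\eta=0,\ g\in\mathfrak{g}\}\subseteq\mathcal{F}(A,\mathfrak{g})$ and $\Pi(A,\theta)=\{\eta\otimes g : d\eta=0,\ g\in\mathfrak{g},\ \det\theta(g)=0\}$. For an affine variety $X$, $X_{(x)}$ denotes its analytic germ at $x$. *)

theory Defs
  imports "HOL-Analysis.Analysis"
begin

text \<open>A cdga over the complex numbers is encoded on a carrier type 'a (a finite-dimensional
real Euclidean space, which fixes the canonical topology) with a complex scalar multiplication
sc (compatible with the real one), a grading by subspaces Agr k (k a natural number),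
a product mul with unit one, and a differential d.  The carrier is the direct sum of the
Agr k.\<close>

definition cdga ::
  "(complex \<Rightarrow> 'a::euclidean_space \<Rightarrow> 'a) \<Rightarrow> (nat \<Rightarrow> 'a set) \<Rightarrow> ('a \<Rightarrow> 'a \<Rightarrow> 'a) \<Rightarrow> 'a \<Rightarrow> ('a \<Rightarrow> 'a) \<Rightarrow> bool"
where
  "cdga sc Agr mul one d \<longleftrightarrow>
     vector_space sc
   \<and> (\<forall>r x. sc (complex_of_real r) x = r *\<^sub>R x)
   \<and> (\<forall>k. module.subspace sc (Agr k))
   \<and> module.span sc (\<Union>k. Agr k) = UNIV
   \<and> (\<forall>N (x::nat \<Rightarrow> 'a). (\<forall>k\<le>N. x k \<in> Agr k) \<and> (\<Sum>k\<le>N. x k) = 0 \<longrightarrow> (\<forall>k\<le>N. x k = 0))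
   \<and> (\<forall>a. Vector_Spaces.linear sc sc (mul a))
   \<and> (\<forall>b. Vector_Spaces.linear sc sc (\<lambda>a. mul a b))
   \<and> (\<forall>a b c. mul (mul a b) c = mul a (mul b c))
   \<and> one \<in> Agr 0
   \<and> (\<forall>a. mul one a = a \<and> mul a one = a)
   \<and> (\<forall>p q a b. a \<in> Agr p \<longrightarrow> b \<in> Agr q \<longrightarrow> mul a b \<in> Agr (p + q))
   \<and> (\<forall>p q a b. a \<in> Agr p \<longrightarrow> b \<in> Agr q \<longrightarrow> mul a b = sc ((-1) ^ (p * q)) (mul b a))
   \<and> Vector_Spaces.linear sc sc d
   \<and> (\<forall>k a. a \<in> Agr k \<longrightarrow> d a \<in> Agr (Suc k))
   \<and> (\<forall>a. d (d a) = 0)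
   \<and> (\<forall>p a b. a \<in> Agr p \<longrightarrow> d (mul a b) = mul (d a) b + sc ((-1) ^ p) (mul a (d b)))"

definition connected_cdga ::
  "(complex \<Rightarrow> 'a::euclidean_space \<Rightarrow> 'a) \<Rightarrow> (nat \<Rightarrow> 'a set) \<Rightarrow> ('a \<Rightarrow> 'a \<Rightarrow> 'a) \<Rightarrow> 'a \<Rightarrow> ('a \<Rightarrow> 'a) \<Rightarrow> bool"
where
  "connected_cdga sc Agr mul one d \<longleftrightarrow>
     cdga sc Agr mul one d \<and> one \<noteq> 0 \<and> Agr 0 = module.span sc {one}"

text \<open>A finite-dimensional complex Lie algebra g is taken as complex^'m with a bracket;
a finite-dimensional representation V is complex^'n with theta : g \<rightarrow> gl(V) given by matrices.\<close>

definition lie_algebra :: "(complex^'m \<Rightarrow> complex^'m \<Rightarrow> complex^'m) \<Rightarrow> bool" where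
  "lie_algebra br \<longleftrightarrow>
     (\<forall>x y z. br (x + y) z = br x z + br y z)
   \<and> (\<forall>c x z. br (c *s x) z = c *s br x z)
   \<and> (\<forall>x y. br x y = - br y x)
   \<and> (\<forall>x y z. br x (br y z) + br y (br z x) + br z (br x y) = 0)"

definition lie_rep ::
  "(complex^'m \<Rightarrow> complex^'m \<Rightarrow> complex^'m) \<Rightarrow> (complex^'m \<Rightarrow> complex^'n^'n) \<Rightarrow> bool" where
  "lie_rep br \<theta> \<longleftrightarrow>
     (\<forall>x y. \<theta> (x + y) = \<theta> x + \<theta> y)
   \<and> (\<forall>c x. \<theta> (c *s x) = (\<chi> i j. c * (\<theta> x $ i $ j)))
   \<and> (\<forall>x y. \<theta> (br x y) = \<theta> x ** \<theta> y - \<theta> y ** \<theta> x)"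

text \<open>An element of A^1 \<otimes> g is a vector omega :: 'a^'m, meaning
  sum_k (omega$k) \<otimes> e_k, with e_k = axis k 1 the standard basis of g.
  An element of A \<otimes> V is a vector a :: 'a^'n, meaning sum_j (a$j) \<otimes> e_j.\<close>

definition flat_conn ::
  "(complex \<Rightarrow> 'a::euclidean_space \<Rightarrow> 'a) \<Rightarrow> (nat \<Rightarrow> 'a set) \<Rightarrow> ('a \<Rightarrow> 'a \<Rightarrow> 'a) \<Rightarrow> ('a \<Rightarrow> 'a)
   \<Rightarrow> (complex^'m \<Rightarrow> complex^'m \<Rightarrow> complex^'m) \<Rightarrow> ('a^'m) set" where
  "flat_conn sc Agr mul d br =
     {\<omega>. (\<forall>k. \<omega> $ k \<in> Agr 1) \<and>
          (\<forall>c. d (\<omega> $ c) + sc (1/2)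
               (\<Sum>k\<in>UNIV. \<Sum>l\<in>UNIV. sc (br (axis k 1) (axis l 1) $ c) (mul (\<omega> $ k) (\<omega> $ l))) = 0)}"

definition flat_conn1 ::
  "(complex \<Rightarrow> 'a::euclidean_space \<Rightarrow> 'a) \<Rightarrow> (nat \<Rightarrow> 'a set) \<Rightarrow> ('a \<Rightarrow> 'a) \<Rightarrow> ('a^'m::finite) set" where
  "flat_conn1 sc Agr d =
     {\<omega>. \<exists>\<eta> (g::complex^'m). \<eta> \<in> Agr 1 \<and> d \<eta> = 0 \<and> \<omega> = (\<chi> k. sc (g $ k) \<eta>)}"

definition Pi_set ::
  "(complex \<Rightarrow> 'a::euclidean_space \<Rightarrow> 'a) \<Rightarrow> (nat \<Rightarrow> 'a set) \<Rightarrow> ('a \<Rightarrow> 'a)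
   \<Rightarrow> (complex^'m \<Rightarrow> complex^'n^'n) \<Rightarrow> ('a^'m::finite) set" where
  "Pi_set sc Agr d \<theta> =
     {\<omega>. \<exists>\<eta> (g::complex^'m). \<eta> \<in> Agr 1 \<and> d \<eta> = 0 \<and> det (\<theta> g) = 0 \<and> \<omega> = (\<chi> k. sc (g $ k) \<eta>)}"

definition cov_deriv ::
  "(complex \<Rightarrow> 'a::euclidean_space \<Rightarrow> 'a) \<Rightarrow> ('a \<Rightarrow> 'a \<Rightarrow> 'a) \<Rightarrow> ('a \<Rightarrow> 'a)
   \<Rightarrow> (complex^'m \<Rightarrow> complex^'n^'n) \<Rightarrow> 'a^'m \<Rightarrow> 'a^'n \<Rightarrow> 'a^'n" where
  "cov_deriv sc mul d \<theta> \<omega> a =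
     (\<chi> j. d (a $ j) + (\<Sum>k\<in>UNIV. \<Sum>j'\<in>UNIV. sc (\<theta> (axis k 1) $ j $ j') (mul (\<omega> $ k) (a $ j'))))"

text \<open>Dimension of the i-th cohomology of a cochain complex given by graded pieces C i
  (subspaces of a vector space with scalar multiplication scv) and a differential D.
  Negative degrees are zero.\<close>
definition cohom_dim ::
  "(complex \<Rightarrow> 'v::ab_group_add \<Rightarrow> 'v) \<Rightarrow> (nat \<Rightarrow> 'v set) \<Rightarrow> ('v \<Rightarrow> 'v) \<Rightarrow> nat \<Rightarrow> nat" where
  "cohom_dim scv C D i =
     vector_space.dim scv {x \<in> C i. D x = 0}
     - vector_space.dim scv (if i = 0 then {0} else D ` C (i - 1))"

definition tensor_scale :: "(complex \<Rightarrow> 'a \<Rightarrow> 'a) \<Rightarrow> complex \<Rightarrow> 'a^'n \<Rightarrow> 'a^'n" where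
  "tensor_scale sc c x = (\<chi> j. sc c (x $ j))"

definition tensor_grading :: "(nat \<Rightarrow> 'a set) \<Rightarrow> nat \<Rightarrow> ('a^'n) set" where
  "tensor_grading Agr i = {x. \<forall>j. x $ j \<in> Agr i}"

definition resonance ::
  "(complex \<Rightarrow> 'a::euclidean_space \<Rightarrow> 'a) \<Rightarrow> (nat \<Rightarrow> 'a set) \<Rightarrow> ('a \<Rightarrow> 'a \<Rightarrow> 'a) \<Rightarrow> ('a \<Rightarrow> 'a)
   \<Rightarrow> (complex^'m \<Rightarrow> complex^'m \<Rightarrow> complex^'m) \<Rightarrow> (complex^'m \<Rightarrow> complex^'n^'n) \<Rightarrow> nat \<Rightarrow> nat \<Rightarrow> ('a^'m) set" where
  "resonance sc Agr mul d br \<theta> i r =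
     {\<omega> \<in> flat_conn sc Agr mul d br.
        r \<le> cohom_dim (tensor_scale sc) (tensor_grading Agr :: nat \<Rightarrow> ('a^'n) set) (cov_deriv sc mul d \<theta> \<omega>) i}"

text \<open>Rank one resonance R^i_r(A) (g = C, theta = id): d_eta a = d a + eta a on A.\<close>
definition resonance1 ::
  "(complex \<Rightarrow> 'a::euclidean_space \<Rightarrow> 'a) \<Rightarrow> (nat \<Rightarrow> 'a set) \<Rightarrow> ('a \<Rightarrow> 'a \<Rightarrow> 'a) \<Rightarrow> ('a \<Rightarrow> 'a)
   \<Rightarrow> nat \<Rightarrow> nat \<Rightarrow> 'a set" where
  "resonance1 sc Agr mul d i r =
     {\<eta>. \<eta> \<in> Agr 1 \<and> d \<eta> = 0 \<and> r \<le> cohom_dim sc Agr (\<lambda>a. d a + mul \<eta> a) i}"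

definition isolated_point_of :: "'x::topological_space \<Rightarrow> 'x set \<Rightarrow> bool" where
  "isolated_point_of x X \<longleftrightarrow> x \<in> X \<and> (\<exists>U. open U \<and> x \<in> U \<and> X \<inter> U \<subseteq> {x})"

definition germ_eq :: "'x::topological_space set \<Rightarrow> 'x set \<Rightarrow> 'x \<Rightarrow> bool" where
  "germ_eq X Y x \<longleftrightarrow> (\<exists>U. open U \<and> x \<in> U \<and> X \<inter> U = Y \<inter> U)"

end

(*
  Near 0 every flat connection is decomposable, omega = eta \<otimes> g with eta a closed 1-form, and
  then (A \<otimes> V, d_omega) is A twisted by eta and the matrix M = theta(g).
  If det M = 0, a nonzero class of H^i(A) (which exists because 0 \<in> R^i_1(A)) combined with vectors
  in the kernels of M and of its transpose gives a nonzero class of H^i(A \<otimes> V, d_omega); hence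
  Pi(A, theta) \<subseteq> R^i_1(A, theta).
  If det M \<noteq> 0, peel off the linear factors of a product (M - r_n) ... (M - r_1) = 0: on the
  kernel of M - a the complex is A twisted by a eta, so H^i(A \<otimes> V, d_omega) = 0 as soon as
  H^i(A, d_{a eta}) = 0 for every eigenvalue a of M. These eigenvalues are nonzero and bounded
  linearly in g, so a eta is a small nonzero point of H^1(A), off R^i_1(A) since 0 is isolated there.
*)
theory Submission
  imports Defs "HOL-Computational_Algebra.Fundamental_Theorem_Algebra"
begin

section \<open>Matrices annihilated by products of linear factors\<close>

definition mat_smult :: "complex \<Rightarrow> complex^'n^'n \<Rightarrow> complex^'n^'n" where
  "mat_smult c A = (\<chi> i j. c * A$i$j)"

primrec mat_pow :: "complex^'n^'n \<Rightarrow> nat \<Rightarrow> complex^'n^'n" where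
  "mat_pow M 0 = mat 1"
| "mat_pow M (Suc k) = M ** mat_pow M k"

definition poly_mat :: "complex poly \<Rightarrow> complex^'n^'n \<Rightarrow> complex^'n^'n" where
  "poly_mat p M = (\<Sum>k<Suc (degree p). mat_smult (coeff p k) (mat_pow M k))"

primrec linear_factors_prod :: "complex^'n^'n \<Rightarrow> (nat \<Rightarrow> complex) \<Rightarrow> nat \<Rightarrow> complex^'n^'n" where
  "linear_factors_prod M r 0 = mat 1"
| "linear_factors_prod M r (Suc n) = (M - mat (r n)) ** linear_factors_prod M r n"

lemma mat_smult_0 [simp]: "mat_smult 0 A = 0"
  by (simp add: mat_smult_def vec_eq_iff)

lemma mat_smult_mat_smult: "mat_smult a (mat_smult b A) = mat_smult (a * b) A"
  by (simp add: mat_smult_def vec_eq_iff)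

lemma mat_smult_sum: "mat_smult a (\<Sum>k\<in>S. f k) = (\<Sum>k\<in>S. mat_smult a (f k))"
  by (induct S rule: infinite_finite_induct) (auto simp: mat_smult_def vec_eq_iff distrib_left)

lemma mat_smult_of_real: "mat_smult (complex_of_real r) A = r *\<^sub>R A"
  by (simp add: mat_smult_def vec_eq_iff) (simp add: scaleR_conv_of_real)

lemma matrix_mul_mat_smult: "A ** mat_smult a B = mat_smult a (A ** B)"
  by (simp add: mat_smult_def vec_eq_iff matrix_matrix_mult_def sum_distrib_left algebra_simps)

lemma mat_mult_left: "mat a ** X = mat_smult a X"
  by (simp add: matrix_matrix_mult_def vec_eq_iff mat_def mat_smult_def
      if_distrib[of "\<lambda>x. x * _"] cong: if_cong)

lemma mat_mult_right: "X ** mat a = mat_smult a X"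
  by (simp add: matrix_matrix_mult_def vec_eq_iff mat_def mat_smult_def
      if_distrib[of "\<lambda>x. _ * x"] mult.commute cong: if_cong)

lemma matrix_mul_sum: "A ** (\<Sum>k\<in>S. f k) = (\<Sum>k\<in>S. A ** f k)"
  by (induct S rule: infinite_finite_induct) (auto simp: matrix_add_ldistrib)

lemma matrix_mul_diff_rdistrib: "((A::'a::ring_1^'n^'n) - B) ** C = A ** C - B ** C"
  by (simp add: matrix_matrix_mult_def vec_eq_iff left_diff_distrib sum_subtractf)

lemma matrix_mul_diff_ldistrib: "(C::'a::ring_1^'n^'n) ** (A - B) = C ** A - C ** B"
  by (simp add: matrix_matrix_mult_def vec_eq_iff right_diff_distrib sum_subtractf)

lemma poly_mat_eq_sum:
  assumes "degree p < N"
  shows "poly_mat p M = (\<Sum>k<N. mat_smult (coeff p k) (mat_pow M k))"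
  unfolding poly_mat_def
  by (rule sum.mono_neutral_left) (use assms in \<open>auto simp: coeff_eq_0\<close>)

lemma poly_mat_smult: "poly_mat (smult a p) M = mat_smult a (poly_mat p M)"
proof -
  have "degree (smult a p) < Suc (degree p)"
    using degree_smult_le[of a p] by auto
  then show ?thesis
    by (simp add: poly_mat_eq_sum poly_mat_def mat_smult_mat_smult mat_smult_sum
        del: sum.lessThan_Suc)
qed

lemma poly_mat_diff: "poly_mat (p - q) M = poly_mat p M - poly_mat q M"
proof -
  let ?N = "Suc (max (degree p) (degree q))"
  have "degree (p - q) < ?N"
    using degree_diff_le_max[of p q] by auto
  then show ?thesis
    by (simp add: poly_mat_eq_sum[of _ ?N] sum_subtractf mat_smult_def vec_eq_iff algebra_simps)
qed

lemma poly_mat_monom: "poly_mat (monom c k) M = mat_smult c (mat_pow M k)"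
proof -
  have "degree (monom c k) < Suc k"
    by (simp add: degree_monom_le le_imp_less_Suc)
  then show ?thesis
    by (simp add: poly_mat_eq_sum coeff_monom)
qed

lemma poly_mat_pCons_0: "poly_mat (pCons 0 p) M = M ** poly_mat p M"
proof -
  have deg: "degree (pCons 0 p) < Suc (Suc (degree p))"
    by (metis degree_pCons_le le_imp_less_Suc)
  show ?thesis
    unfolding poly_mat_eq_sum[OF deg]
    by (subst sum.lessThan_Suc_shift) (simp add: poly_mat_def matrix_mul_mat_smult matrix_mul_sum del: sum.lessThan_Suc)
qed

lemma poly_mat_linear_factor: "poly_mat ([:-a, 1:] * q) M = (M - mat a) ** poly_mat q M"
proof -
  have "[:-a, 1:] * q = pCons 0 q - smult a q"
    by (simp add: mult_pCons_left)
  then show ?thesis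
    by (simp add: poly_mat_diff poly_mat_pCons_0 poly_mat_smult matrix_mul_diff_rdistrib
        mat_mult_left)
qed

lemma poly_mat_prod_linear_factors:
  "poly_mat (\<Prod>k<n. [:- r k, 1:]) M = linear_factors_prod M r n"
proof (induct n)
  case 0
  then show ?case
    by (simp add: poly_mat_def mat_mult_left[symmetric])
next
  case (Suc n)
  have "(\<Prod>k<Suc n. [:- r k, 1:]) = [:- r n, 1:] * (\<Prod>k<n. [:- r k, 1:])"
    by (simp add: mult.commute)
  then show ?case
    by (simp only: poly_mat_linear_factor Suc linear_factors_prod.simps)
qed

lemma poly_mat_annihilator: "\<exists>p. p \<noteq> 0 \<and> poly_mat p (M::complex^'n^'n) = 0"
proof -
  define N where "N = DIM(complex^'n^'n)"
  show ?thesis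
  proof (cases "inj_on (mat_pow M) {..N}")
    case False
    then obtain a b where ab: "a \<noteq> b" "mat_pow M a = mat_pow M b"
      by (auto simp: inj_on_def)
    let ?p = "monom 1 a - monom (1::complex) b"
    have "coeff ?p a = 1"
      using ab by (simp add: coeff_monom)
    then have "?p \<noteq> 0"
      by (metis coeff_0 zero_neq_one)
    moreover have "poly_mat ?p M = 0"
      by (simp add: poly_mat_diff poly_mat_monom ab)
    ultimately show ?thesis by blast
  next
    case True
    let ?S = "mat_pow M ` {..N}"
    \<comment> \<open>\<open>N + 1\<close> powers are linearly dependent already over the reals\<close>
    have "card ?S = Suc N"
      using card_image[OF True] by simp
    then have "dependent ?S"
      by (intro dependent_biggerset) (auto simp: N_def)
    then obtain T u v where T: "finite T" "T \<subseteq> ?S" "v \<in> T" "u v \<noteq> 0"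
      "(\<Sum>v\<in>T. u v *\<^sub>R v) = 0"
      unfolding dependent_explicit by blast
    define c where "c k = (if mat_pow M k \<in> T then complex_of_real (u (mat_pow M k)) else 0)" for k
    define p where "p = (\<Sum>k\<le>N. monom (c k) k)"
    have coeff_p: "coeff p k = (if k \<le> N then c k else 0)" for k
      by (simp add: p_def coeff_sum coeff_monom)
    have deg: "degree p < Suc N"
      using coeff_p by (intro le_imp_less_Suc degree_le) auto
    have "poly_mat p M = (\<Sum>k\<le>N. mat_smult (c k) (mat_pow M k))"
      unfolding poly_mat_eq_sum[OF deg] lessThan_Suc_atMost by (intro sum.cong) (auto simp: coeff_p)
    also have "\<dots> = (\<Sum>k\<in>{k\<in>{..N}. mat_pow M k \<in> T}. u (mat_pow M k) *\<^sub>R mat_pow M k)"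
      by (rule sum.mono_neutral_cong_right) (auto simp: c_def mat_smult_of_real)
    also have "\<dots> = (\<Sum>v\<in>T. u v *\<^sub>R v)"
    proof -
      have "T = mat_pow M ` {k\<in>{..N}. mat_pow M k \<in> T}"
        using T(2) by auto
      moreover have "inj_on (mat_pow M) {k\<in>{..N}. mat_pow M k \<in> T}"
        using True by (rule inj_on_subset) auto
      ultimately show ?thesis
        by (metis (no_types, lifting) sum.reindex_cong)
    qed
    finally have "poly_mat p M = 0"
      using T(5) by simp
    moreover have "p \<noteq> 0"
    proof -
      from T(2,3) obtain k where "k \<le> N" "v = mat_pow M k"
        by auto
      then have "coeff p k \<noteq> 0"
        using T(3,4) by (simp add: coeff_p c_def)
      then show ?thesis by auto
    qed
    ultimately show ?thesis by blast
  qed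
qed

lemma linear_factors_prod_annihilator: "\<exists>r n. linear_factors_prod (M::complex^'n^'n) r n = 0"
proof -
  obtain p where p: "p \<noteq> 0" "poly_mat p M = 0"
    using poly_mat_annihilator by blast
  obtain r where "smult (lead_coeff p) (\<Prod>k<degree p. [:-r k, 1:]) = p"
    using complex_poly_decompose' by blast
  then have "mat_smult (lead_coeff p) (linear_factors_prod M r (degree p)) = 0"
    using p(2) by (metis poly_mat_smult poly_mat_prod_linear_factors)
  then have "linear_factors_prod M r (degree p) = 0"
    using p(1) by (auto simp: mat_smult_def vec_eq_iff)
  then show ?thesis by blast
qed

lemma linear_factors_prod_commute:
  "linear_factors_prod M r n ** M = M ** linear_factors_prod M r n"
proof (induct n)
  case (Suc n)
  have "(M - mat (r n)) ** M = M ** (M - mat (r n))"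
    by (simp add: matrix_mul_diff_rdistrib matrix_mul_diff_ldistrib mat_mult_left mat_mult_right)
  with Suc show ?case
    by (metis linear_factors_prod.simps(2) matrix_mul_assoc)
qed simp

lemma det_eq_0_iff_nontrivial_kernel:
  fixes M :: "'a::field^'n^'n"
  shows "det M = 0 \<longleftrightarrow> (\<exists>v. v \<noteq> 0 \<and> M *v v = 0)"
  by (metis invertible_det_nz invertible_left_inverse matrix_left_invertible_ker)

lemma scalar_product_eq_1_exists:
  fixes v :: "'a::field^'n"
  assumes "v \<noteq> 0"
  obtains f where "scalar_product f v = 1"
proof -
  obtain a where "v$a \<noteq> 0"
    using assms by (auto simp: vec_eq_iff)
  then have "scalar_product (axis a (1 / v$a)) v = 1"
    by (simp add: scalar_product_def axis_def if_distrib[of "\<lambda>x. x * _"] cong: if_cong)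
  then show ?thesis using that by blast
qed

lemma scalar_product_vector_matrix: "scalar_product (w v* M) u = scalar_product w (M *v u)"
  by (simp add: scalar_product_def vector_matrix_mult_def matrix_vector_mult_def sum_distrib_left
      sum_distrib_right mult_ac) (rule sum.swap)

lemma scalar_product_commute: "scalar_product (v::'a::comm_semiring_1^'n) w = scalar_product w v"
  by (simp add: scalar_product_def mult.commute)

lemma mat_vector_mult: "mat a *v (v::'a::comm_ring_1^'n) = a *s v"
  by (simp add: mat_def matrix_vector_mult_def vec_eq_iff if_distrib[of "\<lambda>x. x * _"] cong: if_cong)

lemma eigenvalue_norm_le:
  fixes M :: "complex^'n^'n"
  assumes "M *v v = a *s v" "v \<noteq> 0"
  shows "cmod a \<le> (\<Sum>j\<in>UNIV. \<Sum>l\<in>UNIV. cmod (M$j$l))"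
proof -
  obtain j where j: "cmod (v$j) = Max (range (\<lambda>l. cmod (v$l)))"
  proof -
    have "Max (range (\<lambda>l. cmod (v$l))) \<in> range (\<lambda>l. cmod (v$l))"
      by (rule Max_in) auto
    then show thesis using that by (metis (no_types, lifting) imageE)
  qed
  have le: "cmod (v$l) \<le> cmod (v$j)" for l
    unfolding j by (rule Max_ge) auto
  have "cmod (v$j) > 0"
  proof (rule ccontr)
    assume "\<not> cmod (v$j) > 0"
    then have "cmod (v$l) \<le> 0" for l
      using le by (metis not_less order_trans)
    then have "v = 0"
      by (simp add: vec_eq_iff)
    then show False using assms(2) by simp
  qed
  have "a * v$j = (\<Sum>l\<in>UNIV. M$j$l * v$l)"
    using assms(1) by (simp add: vec_eq_iff matrix_vector_mult_def)
  then have "cmod a * cmod (v$j) = cmod (\<Sum>l\<in>UNIV. M$j$l * v$l)"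
    by (metis norm_mult)
  also have "\<dots> \<le> (\<Sum>l\<in>UNIV. cmod (M$j$l) * cmod (v$l))"
    by (rule order_trans[OF norm_sum]) (simp add: norm_mult)
  also have "\<dots> \<le> (\<Sum>l\<in>UNIV. cmod (M$j$l)) * cmod (v$j)"
    by (simp add: sum_distrib_right sum_mono mult_left_mono le)
  finally have "cmod a \<le> (\<Sum>l\<in>UNIV. cmod (M$j$l))"
    using \<open>cmod (v$j) > 0\<close> by simp
  also have "\<dots> \<le> (\<Sum>j\<in>UNIV. \<Sum>l\<in>UNIV. cmod (M$j$l))"
    by (rule member_le_sum) (auto intro: sum_nonneg)
  finally show ?thesis .
qed

lemma lie_rep_0: "lie_rep br \<theta> \<Longrightarrow> \<theta> 0 = 0"
  unfolding lie_rep_def by (metis add.right_neutral add_left_cancel)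

lemma lie_rep_expand:
  assumes "lie_rep br \<theta>"
  shows "\<theta> g $ j $ l = (\<Sum>k\<in>UNIV. g$k * \<theta> (axis k 1) $ j $ l)"
proof -
  have add: "\<theta> (x + y) = \<theta> x + \<theta> y" for x y
    using assms by (simp add: lie_rep_def)
  have scale: "\<theta> (c *s x) = (\<chi> i j. c * (\<theta> x $ i $ j))" for c x
    using assms by (simp add: lie_rep_def)
  have "\<theta> g = \<theta> (\<Sum>k\<in>UNIV. g$k *s axis k 1)"
    by (simp add: basis_expansion)
  also have "\<dots> = (\<Sum>k\<in>UNIV. \<theta> (g$k *s axis k 1))"
    using sum_comp_morphism[of \<theta> "\<lambda>k. g$k *s axis k 1" UNIV, OF lie_rep_0[OF assms] add]
    by simp
  finally show ?thesis
    by (simp add: sum_component scale)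
qed

lemma lie_rep_norm_le:
  assumes "lie_rep br \<theta>"
  shows "cmod (\<theta> g $ j $ l) \<le> (\<Sum>k\<in>UNIV. cmod (g$k)) * (\<Sum>k\<in>UNIV. cmod (\<theta> (axis k 1) $ j $ l))"
proof -
  have "cmod (\<theta> g $ j $ l) \<le> (\<Sum>k\<in>UNIV. cmod (g$k) * cmod (\<theta> (axis k 1) $ j $ l))"
    unfolding lie_rep_expand[OF assms, of g] by (rule order_trans[OF norm_sum]) (simp add: norm_mult)
  also have "\<dots> \<le> (\<Sum>k\<in>UNIV. (\<Sum>k\<in>UNIV. cmod (g$k)) * cmod (\<theta> (axis k 1) $ j $ l))"
    by (rule sum_mono, rule mult_right_mono) (auto intro: member_le_sum)
  finally show ?thesis
    by (simp add: sum_distrib_left)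
qed

section \<open>Complex-linear algebra on Euclidean spaces\<close>

lemma linear_add: "Vector_Spaces.linear s1 s2 f \<Longrightarrow> f (x + y) = f x + f y"
  by (rule module_hom.add[OF module_hom_linearI])

lemma linear_scale: "Vector_Spaces.linear s1 s2 f \<Longrightarrow> f (s1 c x) = s2 c (f x)"
  by (rule module_hom.scale[OF module_hom_linearI])

lemma linear_0: "Vector_Spaces.linear s1 s2 f \<Longrightarrow> f 0 = 0"
  by (rule module_hom.zero[OF module_hom_linearI])

lemma linear_diff: "Vector_Spaces.linear s1 s2 f \<Longrightarrow> f (x - y) = f x - f y"
  by (rule module_hom.diff[OF module_hom_linearI])

lemma linear_sum: "Vector_Spaces.linear s1 s2 f \<Longrightarrow> f (sum g S) = (\<Sum>a\<in>S. f (g a))"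
  by (rule module_hom.sum[OF module_hom_linearI])

lemma (in vector_space) linear_right_inverse_on:
  assumes "Vector_Spaces.linear scale scale D" "subspace S" "Z \<subseteq> D ` S"
  obtains s where "Vector_Spaces.linear scale scale s" "range s \<subseteq> S" "\<And>z. z \<in> Z \<Longrightarrow> D (s z) = z"
proof -
  obtain B where B: "B \<subseteq> Z" "independent B" "Z \<subseteq> span B"
    by (rule basis_exists)
  obtain pre where pre: "\<And>b. b \<in> B \<Longrightarrow> pre b \<in> S \<and> D (pre b) = b"
    using B(1) assms(3) by (metis (no_types, lifting) image_iff subsetD)
  interpret vp: vector_space_pair scale scale ..
  obtain g where g: "Vector_Spaces.linear scale scale g" "\<forall>x\<in>B. g x = pre x"
      "range g = span (pre ` B)"
    using vp.linear_independent_extend_subspace[OF B(2)] by blast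
  have "range g \<subseteq> S"
    unfolding g(3) using pre by (intro span_minimal[OF _ assms(2)]) auto
  moreover have "D (g z) = z" if "z \<in> Z" for z
  proof -
    have "(D \<circ> g) z = id z"
    proof (rule vp.linear_eq_on[of "D \<circ> g" id])
      show "Vector_Spaces.linear scale scale (D \<circ> g)"
        by (rule Vector_Spaces.linear_compose[OF g(1) assms(1)])
      show "z \<in> span B" using that B(3) by blast
      show "(D \<circ> g) b = id b" if "b \<in> B" for b
        using that g(2) pre by force
    qed (rule linear_id)
    then show ?thesis by simp
  qed
  ultimately show thesis using that g(1) by blast
qed

lemma finite_dimensional_complex_structure:
  fixes s :: "complex \<Rightarrow> 'v::euclidean_space \<Rightarrow> 'v"
  assumes "vector_space s" and of_real: "\<And>r x. s (complex_of_real r) x = r *\<^sub>R x"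
  obtains B where "finite_dimensional_vector_space s B"
proof -
  interpret V: vector_space s by (rule assms(1))
  have span_Basis: "x \<in> V.span Basis" for x
  proof -
    have "x = (\<Sum>b\<in>Basis. s (complex_of_real (inner x b)) b)"
      by (simp add: of_real euclidean_representation)
    also have "\<dots> \<in> V.span Basis"
      by (intro V.span_sum V.span_scale V.span_base)
    finally show ?thesis .
  qed
  obtain B where B: "B \<subseteq> Basis" "V.independent B" "Basis \<subseteq> V.span B"
    by (rule V.maximal_independent_subset)
  have "V.span B = UNIV"
    using V.span_mono[OF B(3)] span_Basis by (auto simp: V.span_span)
  moreover have "finite B"
    using B(1) finite_subset finite_Basis by blast
  ultimately show thesis
    using that assms(1) B(2)
    unfolding finite_dimensional_vector_space_def finite_dimensional_vector_space_axioms_def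
    by blast
qed

lemma complex_structure_norm_bound:
  fixes s :: "complex \<Rightarrow> 'v::euclidean_space \<Rightarrow> 'v"
  assumes "vector_space s" and of_real: "\<And>r x. s (complex_of_real r) x = r *\<^sub>R x"
  obtains K where "K > 0" "\<And>c x. norm (s c x) \<le> K * cmod c * norm x"
proof -
  interpret V: vector_space s by (rule assms(1))
  have "linear (s \<i>)"
    by (rule linearI) (simp_all add: V.scale_right_distrib of_real[symmetric] V.scale_scale mult.commute)
  then obtain K where K: "K > 0" "\<And>x. norm (s \<i> x) \<le> norm x * K"
    using bounded_linear.pos_bounded linear_conv_bounded_linear by blast
  have "norm (s c x) \<le> (1 + K) * cmod c * norm x" for c x
  proof -
    have "s c x = Re c *\<^sub>R x + Im c *\<^sub>R (s \<i> x)"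
      by (subst complex_eq) (simp add: V.scale_left_distrib V.scale_scale mult.commute of_real[symmetric])
    then have "norm (s c x) \<le> \<bar>Re c\<bar> * norm x + \<bar>Im c\<bar> * (norm x * K)"
      by (metis K(2) abs_ge_zero mult_left_mono norm_scaleR norm_triangle_le add_mono order_refl)
    also have "\<dots> \<le> cmod c * norm x + cmod c * (norm x * K)"
      by (intro add_mono mult_right_mono abs_Re_le_cmod abs_Im_le_cmod) (use K in auto)
    finally show ?thesis
      by (simp add: algebra_simps)
  qed
  then show thesis
    using that[of "1 + K"] K(1) by auto
qed

definition cochains_below :: "(nat \<Rightarrow> 'v::zero set) \<Rightarrow> nat \<Rightarrow> 'v set" where
  "cochains_below C i = (if i = 0 then {0} else C (i - 1))"

definition exact_at :: "(nat \<Rightarrow> 'v::zero set) \<Rightarrow> ('v \<Rightarrow> 'v) \<Rightarrow> nat \<Rightarrow> bool" where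
  "exact_at C D i \<longleftrightarrow> {x \<in> C i. D x = 0} \<subseteq> D ` cochains_below C i"

lemma cohom_dim_eq_0_iff_exact_at:
  fixes s :: "complex \<Rightarrow> 'v::euclidean_space \<Rightarrow> 'v"
  assumes "vector_space s" "\<And>r x. s (complex_of_real r) x = r *\<^sub>R x"
    and subspace: "\<And>k. module.subspace s (C k)"
    and linear: "Vector_Spaces.linear s s D"
    and graded: "\<And>x. 0 < i \<Longrightarrow> x \<in> C (i - 1) \<Longrightarrow> D x \<in> C i"
    and square_0: "\<And>x. D (D x) = 0"
  shows "cohom_dim s C D i = 0 \<longleftrightarrow> exact_at C D i"
proof -
  obtain Bs where "finite_dimensional_vector_space s Bs"
    using finite_dimensional_complex_structure assms(1,2) by blast
  then interpret F: finite_dimensional_vector_space s Bs .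
  define Z where "Z = {x \<in> C i. D x = 0}"
  define B where "B = D ` cochains_below C i"
  interpret L: Vector_Spaces.linear s s D by (rule linear)
  have "F.subspace B"
    using L.subspace_image[OF subspace[of "i - 1"]]
    by (simp add: B_def cochains_below_def F.subspace_def)
  moreover have "B \<subseteq> Z"
    using graded square_0 F.subspace_0[OF subspace[of 0]] linear_0[OF linear]
    by (auto simp: B_def Z_def cochains_below_def)
  moreover have "cohom_dim s C D i = F.dim Z - F.dim B"
    by (simp add: cohom_dim_def Z_def B_def cochains_below_def image_constant_conv linear_0[OF linear])
  ultimately have "cohom_dim s C D i = 0 \<longleftrightarrow> Z \<subseteq> B"
    by (metis F.dim_eq_span F.dim_subset F.span_eq_iff F.span_superset diff_is_0_eq order_trans)
  then show ?thesis
    by (simp add: exact_at_def Z_def B_def)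
qed

section \<open>Twisted complexes of a cdga\<close>

definition map_vec :: "('a \<Rightarrow> 'a) \<Rightarrow> 'a^'n \<Rightarrow> 'a^'n" where
  "map_vec s c = (\<chi> j. s (c$j))"

locale cdga_alg = vs: vector_space sc
  for sc :: "complex \<Rightarrow> 'a::euclidean_space \<Rightarrow> 'a" +
  fixes Agr :: "nat \<Rightarrow> 'a set" and mul :: "'a \<Rightarrow> 'a \<Rightarrow> 'a" and d :: "'a \<Rightarrow> 'a"
  assumes sc_of_real: "sc (complex_of_real r) x = r *\<^sub>R x"
    and subspace_Agr: "vs.subspace (Agr k)"
    and linear_mul_left: "Vector_Spaces.linear sc sc (mul a)"
    and linear_mul_right: "Vector_Spaces.linear sc sc (\<lambda>a. mul a b)"
    and mul_assoc: "mul (mul a b) c = mul a (mul b c)"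
    and mul_Agr: "a \<in> Agr p \<Longrightarrow> b \<in> Agr q \<Longrightarrow> mul a b \<in> Agr (p + q)"
    and mul_commute_graded: "a \<in> Agr p \<Longrightarrow> b \<in> Agr q \<Longrightarrow> mul a b = sc ((-1) ^ (p * q)) (mul b a)"
    and linear_d: "Vector_Spaces.linear sc sc d"
    and d_Agr: "a \<in> Agr k \<Longrightarrow> d a \<in> Agr (Suc k)"
    and d_d [simp]: "d (d a) = 0"
    and d_mul: "a \<in> Agr p \<Longrightarrow> d (mul a b) = mul (d a) b + sc ((-1) ^ p) (mul a (d b))"

lemma cdga_alg_if_cdga:
  assumes "cdga sc Agr mul one d"
  shows "cdga_alg sc Agr mul d"
proof (rule cdga_alg.intro)
  show "vector_space sc"
    using assms unfolding cdga_def by (elim conjE)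
  show "cdga_alg_axioms sc Agr mul d"
    using assms unfolding cdga_def cdga_alg_axioms_def by (elim conjE) (intro conjI allI impI; metis)
qed

context cdga_alg
begin

lemma d_scale: "d (sc c x) = sc c (d x)"
  by (rule linear_scale[OF linear_d])

lemma d_0 [simp]: "d 0 = 0"
  by (rule linear_0[OF linear_d])

lemma mul_scale_left: "mul (sc c x) b = sc c (mul x b)"
  using linear_scale[OF linear_mul_right] by simp

lemma mul_scale_right: "mul a (sc c x) = sc c (mul a x)"
  by (rule linear_scale[OF linear_mul_left])

lemma mul_add_right: "mul a (x + y) = mul a x + mul a y"
  by (rule linear_add[OF linear_mul_left])

lemma mul_sum_right: "mul a (sum g S) = (\<Sum>x\<in>S. mul a (g x))"
  by (rule linear_sum[OF linear_mul_left])

lemma mul_0_left [simp]: "mul 0 b = 0"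
  using linear_0[OF linear_mul_right] by simp

lemma mul_0_right [simp]: "mul a 0 = 0"
  by (rule linear_0[OF linear_mul_left])

lemma Agr_0: "0 \<in> Agr k"
  using vs.subspace_0[OF subspace_Agr] .

lemma Agr_add: "x \<in> Agr k \<Longrightarrow> y \<in> Agr k \<Longrightarrow> x + y \<in> Agr k"
  using vs.subspace_add[OF subspace_Agr] .

lemma Agr_scale: "x \<in> Agr k \<Longrightarrow> sc c x \<in> Agr k"
  using vs.subspace_scale[OF subspace_Agr] .

lemma Agr_sum: "(\<And>x. x \<in> B \<Longrightarrow> f x \<in> Agr k) \<Longrightarrow> sum f B \<in> Agr k"
  using vs.subspace_sum[OF subspace_Agr] .

lemma mul_self_Agr_1: "e \<in> Agr 1 \<Longrightarrow> mul e e = 0"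
  using mul_commute_graded[of e 1 e 1] sc_of_real[of "-1" "mul e e"]
  by (simp add: eq_neg_iff_add_eq_0 flip: scaleR_2)

lemma mul_mul_self_Agr_1: "e \<in> Agr 1 \<Longrightarrow> mul e (mul e x) = 0"
  by (simp add: mul_assoc[symmetric] mul_self_Agr_1)

lemma d_mul_closed_Agr_1: "e \<in> Agr 1 \<Longrightarrow> d e = 0 \<Longrightarrow> d (mul e x) = - mul e (d x)"
  using d_mul[of e 1 x] sc_of_real[of "-1"] by simp

definition twisted_d :: "'a \<Rightarrow> 'a \<Rightarrow> 'a" where
  "twisted_d e a = d a + mul e a"

lemma linear_twisted_d: "Vector_Spaces.linear sc sc (twisted_d e)"
  unfolding Vector_Spaces.linear_iff twisted_d_def
  by (simp add: vs.vector_space_axioms linear_add[OF linear_d] mul_add_right d_scale mul_scale_right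
      vs.scale_right_distrib)

lemma cohom_dim_twisted_eq_0_iff:
  assumes "e \<in> Agr 1" "d e = 0"
  shows "cohom_dim sc Agr (\<lambda>a. d a + mul e a) i = 0 \<longleftrightarrow> exact_at Agr (twisted_d e) i"
proof -
  have "cohom_dim sc Agr (twisted_d e) i = 0 \<longleftrightarrow> exact_at Agr (twisted_d e) i"
  proof (rule cohom_dim_eq_0_iff_exact_at[OF vs.vector_space_axioms sc_of_real subspace_Agr
        linear_twisted_d])
    show "twisted_d e x \<in> Agr i" if "0 < i" "x \<in> Agr (i - 1)" for x
      using that assms d_Agr[of x "i - 1"] mul_Agr[of e 1 x "i - 1"] Agr_add by (simp add: twisted_d_def)
    show "twisted_d e (twisted_d e x) = 0" for x
      using assms by (simp add: twisted_d_def linear_add[OF linear_d] mul_add_right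
          d_mul_closed_Agr_1 mul_mul_self_Agr_1)
  qed
  moreover have "(\<lambda>a. d a + mul e a) = twisted_d e"
    by (simp add: fun_eq_iff twisted_d_def)
  ultimately show ?thesis by simp
qed

lemma resonance1_iff:
  "e \<in> Agr 1 \<Longrightarrow> d e = 0 \<Longrightarrow> e \<in> resonance1 sc Agr mul d i 1 \<longleftrightarrow> \<not> exact_at Agr (twisted_d e) i"
  using cohom_dim_twisted_eq_0_iff[of e i] by (auto simp: resonance1_def)

lemma twisted_d_0: "twisted_d 0 = d"
  by (simp add: twisted_d_def fun_eq_iff)

lemma decomposable_flat_conn:
  "e \<in> Agr 1 \<Longrightarrow> d e = 0 \<Longrightarrow> (\<chi> k. sc (g$k) e) \<in> flat_conn sc Agr mul d br"
  by (simp add: flat_conn_def Agr_scale d_scale mul_scale_left mul_scale_right mul_self_Agr_1)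

lemma norm_eigenvalue_scale_le:
  assumes "lie_rep br (\<theta> :: complex^'m \<Rightarrow> complex^'n^'n)"
  obtains L where "L \<ge> 0" "\<And>e g a v. \<theta> g *v v = a *s v \<Longrightarrow> v \<noteq> 0
      \<Longrightarrow> norm (sc a e) \<le> L * norm ((\<chi> k. sc (g$k) e) :: 'a^'m)"
proof -
  obtain K where K: "K > 0" "\<And>c x. norm (sc c x) \<le> K * cmod c * norm x"
    using complex_structure_norm_bound[OF vs.vector_space_axioms sc_of_real] by blast
  have K_inverse: "cmod c * norm x \<le> K * norm (sc c x)" for c x
  proof (cases "c = 0")
    case False
    then have "norm x \<le> K * cmod (1 / c) * norm (sc c x)"
      using K(2)[of "1 / c" "sc c x"] by (simp add: vs.scale_scale)
    then show ?thesis
      using False by (simp add: norm_divide field_simps)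
  qed (use K in simp)
  define C where "C = (\<Sum>j\<in>UNIV. \<Sum>l\<in>UNIV. \<Sum>k\<in>UNIV. cmod (\<theta> (axis k 1) $ j $ l))"
  have "C \<ge> 0"
    unfolding C_def by (intro sum_nonneg) auto
  have "norm (sc a e) \<le> (K * C * K * CARD('m)) * norm ((\<chi> k. sc (g$k) e) :: 'a^'m)"
    if "\<theta> g *v v = a *s v" "v \<noteq> 0" for e g a v
  proof -
    define G where "G = (\<Sum>k\<in>UNIV. cmod (g$k))"
    define w :: "'a^'m" where "w = (\<chi> k. sc (g$k) e)"
    have "cmod a \<le> (\<Sum>j\<in>UNIV. \<Sum>l\<in>UNIV. cmod (\<theta> g $ j $ l))"
      by (rule eigenvalue_norm_le[OF that])
    also have "\<dots> \<le> (\<Sum>j\<in>UNIV. \<Sum>l\<in>UNIV. G * (\<Sum>k\<in>UNIV. cmod (\<theta> (axis k 1) $ j $ l)))"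
      unfolding G_def by (intro sum_mono lie_rep_norm_le[OF assms])
    also have "\<dots> = G * C"
      by (simp add: C_def sum_distrib_left)
    finally have a: "cmod a \<le> G * C" .
    have "G * norm e = (\<Sum>k\<in>UNIV. cmod (g$k) * norm e)"
      by (simp add: G_def sum_distrib_right)
    also have "\<dots> \<le> (\<Sum>k\<in>(UNIV::'m set). K * norm w)"
    proof (rule sum_mono)
      fix k
      have "cmod (g$k) * norm e \<le> K * norm (sc (g$k) e)"
        by (rule K_inverse)
      also have "\<dots> \<le> K * norm w"
        using Finite_Cartesian_Product.norm_nth_le[of w k] K(1) by (simp add: w_def)
      finally show "cmod (g$k) * norm e \<le> K * norm w" .
    qed
    finally have G: "G * norm e \<le> K * CARD('m) * norm w"
      by (simp add: mult_ac)
    have "norm (sc a e) \<le> K * cmod a * norm e"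
      by (rule K(2))
    also have "\<dots> \<le> K * (G * C) * norm e"
      using a K(1) by (intro mult_right_mono mult_left_mono) auto
    also have "\<dots> = K * C * (G * norm e)"
      by (simp add: algebra_simps)
    also have "\<dots> \<le> K * C * (K * CARD('m) * norm w)"
      using G K(1) \<open>C \<ge> 0\<close> by (intro mult_left_mono) auto
    finally show ?thesis
      by (simp add: w_def algebra_simps)
  qed
  then show thesis
    using that[of "K * C * K * CARD('m)"] K(1) \<open>C \<ge> 0\<close> by simp
qed

text \<open>As in the definition of \<open>cov_deriv\<close>, \<open>'a^'n\<close> stands for \<open>A \<otimes> V\<close>. In this encoding \<open>tensor z u\<close>
  is \<open>z \<otimes> u\<close>, \<open>mat_act Q\<close> is \<open>id \<otimes> Q\<close>, \<open>contract f\<close> is \<open>id \<otimes> f\<close> for a covector \<open>f\<close>, and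
  \<open>map_vec s\<close> is \<open>s \<otimes> id\<close>.\<close>

abbreviation tsc :: "complex \<Rightarrow> 'a^'n \<Rightarrow> 'a^'n" where
  "tsc \<equiv> tensor_scale sc"

abbreviation tg :: "nat \<Rightarrow> ('a^'n) set" where
  "tg \<equiv> tensor_grading Agr"

definition tensor :: "'a \<Rightarrow> complex^'n \<Rightarrow> 'a^'n" where
  "tensor z u = (\<chi> l. sc (u$l) z)"

definition mat_act :: "complex^'n^'n \<Rightarrow> 'a^'n \<Rightarrow> 'a^'n" where
  "mat_act Q c = (\<chi> j. \<Sum>l\<in>UNIV. sc (Q$j$l) (c$l))"

definition contract :: "complex^'n \<Rightarrow> 'a^'n \<Rightarrow> 'a" where
  "contract f c = (\<Sum>l\<in>UNIV. sc (f$l) (c$l))"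

lemma tensor_add_left: "tensor (x + y) u = tensor x u + tensor y u"
  by (simp add: tensor_def vec_eq_iff vs.scale_right_distrib)

lemma tensor_0_left [simp]: "tensor 0 u = 0"
  by (simp add: tensor_def vec_eq_iff)

lemma tensor_0_right [simp]: "tensor z 0 = 0"
  by (simp add: tensor_def vec_eq_iff)

lemma tensor_tg: "z \<in> Agr k \<Longrightarrow> tensor z u \<in> tg k"
  by (simp add: tensor_def tensor_grading_def Agr_scale)

lemma mat_act_tensor: "mat_act Q (tensor z u) = tensor z (Q *v u)"
  by (simp add: mat_act_def tensor_def vec_eq_iff matrix_vector_mult_def vs.scale_scale
      vs.scale_sum_left)

lemma contract_tensor: "contract f (tensor z u) = sc (scalar_product f u) z"
  by (simp add: contract_def tensor_def scalar_product_def vs.scale_scale vs.scale_sum_left)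

lemma mat_act_mult: "mat_act (Q ** R) c = mat_act Q (mat_act R c)"
proof -
  have "(\<Sum>l\<in>UNIV. sc (\<Sum>k\<in>UNIV. Q$j$k * R$k$l) (c$l))
      = (\<Sum>k\<in>UNIV. sc (Q$j$k) (\<Sum>l\<in>UNIV. sc (R$k$l) (c$l)))" for j
    by (simp add: vs.scale_sum_left vs.scale_sum_right vs.scale_scale) (rule sum.swap)
  then show ?thesis
    by (simp add: mat_act_def matrix_matrix_mult_def vec_eq_iff)
qed

lemma mat_act_mat [simp]: "mat_act (mat a) c = tsc a c"
  by (simp add: mat_act_def mat_def tensor_scale_def vec_eq_iff if_distrib[of "\<lambda>x. sc x _"]
      cong: if_cong)

lemma tsc_1 [simp]: "tsc 1 c = c"
  by (simp add: tensor_scale_def vec_eq_iff)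

lemma mat_act_add: "mat_act Q (a + b) = mat_act Q a + mat_act Q b"
  by (simp add: mat_act_def vec_eq_iff vs.scale_right_distrib sum.distrib)

lemma mat_act_diff: "mat_act Q (a - b) = mat_act Q a - mat_act Q b"
  by (simp add: mat_act_def vec_eq_iff vs.scale_right_diff_distrib sum_subtractf)

lemma mat_act_diff_left: "mat_act (Q - R) c = mat_act Q c - mat_act R c"
  by (simp add: mat_act_def vec_eq_iff vs.scale_left_diff_distrib sum_subtractf)

lemma mat_act_0 [simp]: "mat_act Q 0 = 0"
  by (simp add: mat_act_def vec_eq_iff)

lemma mat_act_0_left [simp]: "mat_act 0 c = 0"
  by (simp add: mat_act_def vec_eq_iff)

lemma mat_act_tg: "c \<in> tg k \<Longrightarrow> mat_act Q c \<in> tg k"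
  by (simp add: mat_act_def tensor_grading_def Agr_scale Agr_sum)

lemma contract_tg: "c \<in> tg k \<Longrightarrow> contract f c \<in> Agr k"
  by (simp add: contract_def tensor_grading_def Agr_scale Agr_sum)

lemma contract_add: "contract f (a + b) = contract f a + contract f b"
  by (simp add: contract_def vs.scale_right_distrib sum.distrib)

lemma contract_mat_act: "contract f (mat_act Q c) = contract (f v* Q) c"
proof -
  have "(\<Sum>l\<in>UNIV. sc (f$l) (\<Sum>k\<in>UNIV. sc (Q$l$k) (c$k)))
      = (\<Sum>k\<in>UNIV. sc (\<Sum>l\<in>UNIV. Q$l$k * f$l) (c$k))"
    by (simp add: vs.scale_sum_left vs.scale_sum_right vs.scale_scale mult.commute) (rule sum.swap)
  then show ?thesis
    by (simp add: contract_def mat_act_def vector_matrix_mult_def mult.commute)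
qed

lemma mat_act_map_vec:
  "Vector_Spaces.linear sc sc s \<Longrightarrow> mat_act Q (map_vec s c) = map_vec s (mat_act Q c)"
  by (simp add: mat_act_def map_vec_def vec_eq_iff linear_sum linear_scale)

lemma contract_map_vec:
  "Vector_Spaces.linear sc sc s \<Longrightarrow> contract f (map_vec s c) = s (contract f c)"
  by (simp add: contract_def map_vec_def linear_sum linear_scale)

lemma map_vec_tensor:
  "Vector_Spaces.linear sc sc s \<Longrightarrow> map_vec s (tensor z u) = tensor (s z) u"
  by (simp add: tensor_def map_vec_def vec_eq_iff linear_scale)

lemma map_vec_add:
  "Vector_Spaces.linear sc sc s \<Longrightarrow> map_vec s (a + b) = map_vec s a + map_vec s b"
  by (simp add: map_vec_def vec_eq_iff linear_add)

lemma map_vec_diff: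
  "Vector_Spaces.linear sc sc s \<Longrightarrow> map_vec s (a - b) = map_vec s a - map_vec s b"
  by (simp add: map_vec_def vec_eq_iff linear_diff)

lemma map_vec_0: "Vector_Spaces.linear sc sc s \<Longrightarrow> map_vec s 0 = 0"
  by (simp add: map_vec_def vec_eq_iff linear_0)

lemma tg_add: "x \<in> tg k \<Longrightarrow> y \<in> tg k \<Longrightarrow> x + y \<in> tg k"
  by (simp add: tensor_grading_def Agr_add)

lemma tg_diff: "x \<in> tg k \<Longrightarrow> y \<in> tg k \<Longrightarrow> x - y \<in> tg k"
  by (simp add: tensor_grading_def vs.subspace_diff[OF subspace_Agr])

lemma vector_space_tsc: "vector_space tsc"
  unfolding vector_space_def tensor_scale_def
  by (simp add: vec_eq_iff vs.scale_right_distrib vs.scale_left_distrib vs.scale_scale)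

lemma tsc_of_real: "tsc (complex_of_real r) x = r *\<^sub>R x"
  by (simp add: tensor_scale_def vec_eq_iff sc_of_real)

lemma subspace_tg: "module.subspace tsc (tg k)"
proof -
  interpret T: vector_space tsc by (rule vector_space_tsc)
  show ?thesis
    by (auto simp: T.subspace_def tensor_scale_def tensor_grading_def Agr_scale Agr_add Agr_0)
qed

lemma cochains_below_tg_add:
  "x \<in> cochains_below tg i \<Longrightarrow> y \<in> cochains_below tg i \<Longrightarrow> x + y \<in> cochains_below tg i"
  by (auto simp: cochains_below_def tg_add)

lemma contract_0 [simp]: "contract f 0 = 0"
  by (simp add: contract_def)

lemma contract_0_left [simp]: "contract 0 c = 0"
  by (simp add: contract_def)

lemma contract_cochains_below: "c \<in> cochains_below tg i \<Longrightarrow> contract f c \<in> cochains_below Agr i"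
  by (auto simp: cochains_below_def contract_tg)

lemma subspace_cochains_below: "vs.subspace (cochains_below Agr i)"
  by (simp add: cochains_below_def subspace_Agr)

lemma map_vec_cochains_below:
  assumes "range s \<subseteq> cochains_below Agr i"
  shows "map_vec s c \<in> cochains_below tg i"
proof -
  have "s x \<in> cochains_below Agr i" for x
    using assms by auto
  then show ?thesis
    by (auto simp: cochains_below_def map_vec_def tensor_grading_def vec_eq_iff)
qed

lemma zero_cochains_below_tg: "0 \<in> cochains_below tg i"
  by (simp add: cochains_below_def tensor_grading_def Agr_0)

end

locale cdga_closed_form = cdga_alg +
  fixes eta :: 'a
  assumes eta_Agr: "eta \<in> Agr 1" and eta_closed: "d eta = 0"
begin

definition twisted_dV :: "complex^'n^'n \<Rightarrow> 'a^'n \<Rightarrow> 'a^'n" where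
  "twisted_dV M c = map_vec d c + map_vec (mul eta) (mat_act M c)"

lemma twisted_dV_add: "twisted_dV M (a + b) = twisted_dV M a + twisted_dV M b"
  by (simp add: twisted_dV_def map_vec_add linear_d linear_mul_left mat_act_add)

lemma twisted_dV_diff: "twisted_dV M (a - b) = twisted_dV M a - twisted_dV M b"
  by (simp add: twisted_dV_def map_vec_diff linear_d linear_mul_left mat_act_diff)

lemma twisted_dV_0 [simp]: "twisted_dV M 0 = 0"
  by (simp add: twisted_dV_def map_vec_0 linear_d linear_mul_left)

lemma twisted_dV_scale: "twisted_dV M (tsc c x) = tsc c (twisted_dV M x)"
  by (simp add: twisted_dV_def map_vec_def mat_act_def tensor_scale_def vec_eq_iff d_scale
      mul_scale_right mul_sum_right vs.scale_sum_right vs.scale_scale vs.scale_right_distrib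
      mult.commute)

lemma linear_twisted_dV: "Vector_Spaces.linear tsc tsc (twisted_dV M)"
  unfolding Vector_Spaces.linear_iff using vector_space_tsc twisted_dV_add twisted_dV_scale by blast

lemma twisted_dV_twisted_dV [simp]: "twisted_dV M (twisted_dV M c) = 0"
proof -
  have anticommute: "map_vec d (map_vec (mul eta) x) = - map_vec (mul eta) (map_vec d x)" for x
    by (simp add: map_vec_def vec_eq_iff d_mul_closed_Agr_1[OF eta_Agr eta_closed])
  have square_0: "map_vec (mul eta) (map_vec (mul eta) x) = 0" "map_vec d (map_vec d x) = 0" for x
    by (simp_all add: map_vec_def vec_eq_iff mul_mul_self_Agr_1[OF eta_Agr])
  show ?thesis
    by (simp add: twisted_dV_def map_vec_add linear_d linear_mul_left mat_act_add
        mat_act_map_vec anticommute square_0)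
qed

lemma twisted_dV_tg: "c \<in> tg k \<Longrightarrow> twisted_dV M c \<in> tg (Suc k)"
  using mat_act_tg[of c k M] d_Agr mul_Agr[OF eta_Agr] Agr_add
  by (simp add: twisted_dV_def map_vec_def tensor_grading_def)

lemma twisted_dV_cochains_below: "c \<in> cochains_below tg i \<Longrightarrow> twisted_dV M c \<in> tg i"
  using twisted_dV_tg[of c "i - 1" M] by (cases i) (auto simp: cochains_below_def tensor_grading_def Agr_0)

lemma twisted_dV_mat_act:
  "Q ** M = M ** Q \<Longrightarrow> twisted_dV M (mat_act Q c) = mat_act Q (twisted_dV M c)"
  by (simp add: twisted_dV_def mat_act_add mat_act_map_vec linear_d linear_mul_left
      flip: mat_act_mult)

lemma contract_twisted_dV:
  "contract f (twisted_dV M c) = d (contract f c) + mul eta (contract (f v* M) c)"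
  by (simp add: twisted_dV_def contract_add contract_map_vec linear_d linear_mul_left
      contract_mat_act)

lemma twisted_dV_tensor: "twisted_dV M (tensor z u) = tensor (d z) u + tensor (mul eta z) (M *v u)"
  by (simp add: twisted_dV_def map_vec_tensor linear_d linear_mul_left mat_act_tensor)

lemma twisted_dV_eigen:
  assumes "mat_act (M - mat a) c = 0"
  shows "twisted_dV M c = map_vec (twisted_d (sc a eta)) c"
  using assms
  by (simp add: mat_act_diff_left twisted_dV_def map_vec_def twisted_d_def vec_eq_iff
      tensor_scale_def mul_scale_right mul_scale_left)

lemma cohom_dim_twisted_dV_eq_0_iff:
  "cohom_dim tsc tg (twisted_dV M) i = 0 \<longleftrightarrow> exact_at tg (twisted_dV M) i"
proof (rule cohom_dim_eq_0_iff_exact_at[OF vector_space_tsc tsc_of_real subspace_tg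
      linear_twisted_dV])
  show "twisted_dV M x \<in> tg i" if "0 < i" "x \<in> tg (i - 1)" for x
    using that twisted_dV_tg[of x "i - 1"] by simp
qed simp

text \<open>A class \<open>z\<close> of \<open>H\<^sup>i(A)\<close> and vectors \<open>v \<in> ker M\<close>, \<open>w \<in> ker M\<^sup>T\<close> produce a class of
  \<open>H\<^sup>i(A \<otimes> V)\<close>: either \<open>z \<otimes> v\<close> itself, or, when \<open>z \<otimes> v\<close> is exact, a cocycle whose contraction
  with \<open>w\<close> recovers \<open>z\<close>.\<close>
lemma not_exact_twisted_dV_if_det_eq_0:
  fixes M :: "complex^'n^'n"
  assumes "det M = 0" and "\<not> exact_at Agr d i"
  shows "\<not> exact_at tg (twisted_dV M) i"
proof -
  obtain z where z: "z \<in> Agr i" "d z = 0" "z \<notin> d ` cochains_below Agr i"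
    using assms(2) by (auto simp: exact_at_def)
  obtain v where v: "v \<noteq> 0" "M *v v = 0"
    using assms(1) det_eq_0_iff_nontrivial_kernel by blast
  obtain w where w: "w \<noteq> 0" "transpose M *v w = 0"
    using assms(1) det_eq_0_iff_nontrivial_kernel[of "transpose M"] by auto
  have wM: "w v* M = 0"
    using w(2) by simp
  obtain f where f: "scalar_product f v = 1"
    using scalar_product_eq_1_exists[OF v(1)] by blast
  obtain u where u: "scalar_product w u = 1"
    using scalar_product_eq_1_exists[OF w(1)] scalar_product_commute by metis
  have wMu: "scalar_product w (M *v u) = 0"
    using scalar_product_vector_matrix[of w M u] wM by (simp add: scalar_product_def)
  show ?thesis
  proof (cases "tensor z v \<in> twisted_dV M ` cochains_below tg i")
    case False
    moreover have "twisted_dV M (tensor z v) = 0"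
      by (simp add: twisted_dV_tensor z(2) v(2))
    ultimately show ?thesis
      using tensor_tg[OF z(1)] by (auto simp: exact_at_def)
  next
    case True
    then obtain b where b: "b \<in> cochains_below tg i" "tensor z v = twisted_dV M b"
      by blast
    define b' where "b' = contract f b"
    have "z = contract f (tensor z v)"
      by (simp add: contract_tensor f)
    then have z_eq: "z = d b' + mul eta (contract (f v* M) b)"
      by (simp add: b(2) contract_twisted_dV b'_def)
    have b': "b' \<in> cochains_below Agr i"
      unfolding b'_def by (rule contract_cochains_below[OF b(1)])
    define y where "y = tensor z u + tensor (mul eta b') (M *v u)"
    have "mul eta b' \<in> Agr i"
      using b' mul_Agr[OF eta_Agr, of b' "i - 1"] by (cases i) (auto simp: cochains_below_def Agr_0)
    then have "y \<in> tg i"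
      unfolding y_def by (intro tg_add tensor_tg z(1))
    moreover have "twisted_dV M y = 0"
    proof -
      have "mul eta z + d (mul eta b') = 0"
        using z_eq by (simp add: d_mul_closed_Agr_1[OF eta_Agr eta_closed] mul_add_right
            mul_mul_self_Agr_1[OF eta_Agr])
      then show ?thesis
        by (simp add: y_def twisted_dV_add twisted_dV_tensor z(2) mul_mul_self_Agr_1[OF eta_Agr]
            flip: tensor_add_left)
    qed
    moreover have "y \<notin> twisted_dV M ` cochains_below tg i"
    proof
      assume "y \<in> twisted_dV M ` cochains_below tg i"
      then obtain q where q: "q \<in> cochains_below tg i" "y = twisted_dV M q"
        by blast
      have "z = contract w y"
        by (simp add: y_def contract_add contract_tensor u wMu)
      also have "\<dots> = d (contract w q)"
        by (simp add: q(2) contract_twisted_dV wM)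
      finally show False
        using z(3) contract_cochains_below[OF q(1)] by blast
    qed
    ultimately show ?thesis
      by (auto simp: exact_at_def)
  qed
qed

text \<open>Induction step along a product of linear factors of \<open>M\<close>: on the kernel of \<open>M - a\<close> the
  differential \<open>twisted_dV M\<close> acts componentwise as \<open>twisted_d (a \<cdot> eta)\<close>, so a linear section of
  that differential lets us subtract a coboundary and land in the kernel of \<open>L\<close>.\<close>
lemma coboundary_if_kernel_linear_factor:
  fixes M L :: "complex^'n^'n"
  assumes IH: "\<And>c. c \<in> tg i \<Longrightarrow> twisted_dV M c = 0 \<Longrightarrow> mat_act L c = 0
      \<Longrightarrow> c \<in> twisted_dV M ` cochains_below tg i"
    and commute: "L ** M = M ** L"
    and eigen_exact: "\<And>v. v \<noteq> 0 \<Longrightarrow> M *v v = a *s v \<Longrightarrow> exact_at Agr (twisted_d (sc a eta)) i"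
    and c: "mat_act ((M - mat a) ** L) c = 0" "c \<in> tg i" "twisted_dV M c = 0"
  shows "c \<in> twisted_dV M ` cochains_below tg i"
proof -
  define c' where "c' = mat_act L c"
  have kernel: "mat_act (M - mat a) c' = 0"
    using c(1) by (simp add: c'_def mat_act_mult)
  show ?thesis
  proof (cases "det (M - mat a) = 0")
    case False
    then obtain R where "R ** (M - mat a) = mat 1"
      unfolding invertible_det_nz[symmetric] invertible_def by blast
    then have "c' = mat_act R (mat_act (M - mat a) c')"
      by (simp flip: mat_act_mult)
    then have "c' = 0"
      by (simp add: kernel)
    then show ?thesis
      using IH[OF c(2,3)] by (simp add: c'_def)
  next
    case True
    then obtain v where "v \<noteq> 0" "M *v v = a *s v"
      using det_eq_0_iff_nontrivial_kernel[of "M - mat a"]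
      by (auto simp: matrix_vector_mult_diff_rdistrib mat_vector_mult)
    define D where "D = twisted_d (sc a eta)"
    have "exact_at Agr D i"
      unfolding D_def by (rule eigen_exact) fact+
    moreover have c'_cocycle: "map_vec D c' = 0"
      using twisted_dV_eigen[OF kernel] twisted_dV_mat_act[OF commute] c(3)
      by (simp add: c'_def D_def)
    ultimately obtain s where s: "Vector_Spaces.linear sc sc s" "range s \<subseteq> cochains_below Agr i"
        "\<And>z. z \<in> {x \<in> Agr i. D x = 0} \<Longrightarrow> D (s z) = z"
      using vs.linear_right_inverse_on[OF linear_twisted_d subspace_cochains_below]
      unfolding exact_at_def D_def by blast
    define e where "e = map_vec s c"
    have e: "e \<in> cochains_below tg i"
      unfolding e_def by (rule map_vec_cochains_below[OF s(2)])
    have "twisted_dV M (map_vec s c') = c'"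
    proof -
      have "mat_act (M - mat a) (map_vec s c') = 0"
        by (simp add: mat_act_map_vec[OF s(1)] kernel map_vec_0[OF s(1)])
      moreover have "D (s (c'$k)) = c'$k" for k
        using s(3) c'_cocycle mat_act_tg[OF c(2)]
        by (simp add: map_vec_def vec_eq_iff tensor_grading_def c'_def)
      ultimately show ?thesis
        by (simp add: twisted_dV_eigen map_vec_def vec_eq_iff D_def)
    qed
    then have "mat_act L (twisted_dV M e) = c'"
      by (simp add: e_def twisted_dV_mat_act[OF commute, symmetric] mat_act_map_vec[OF s(1)] c'_def)
    then obtain h where h: "h \<in> cochains_below tg i" "c - twisted_dV M e = twisted_dV M h"
      using IH[of "c - twisted_dV M e"] c(2,3) twisted_dV_cochains_below[OF e]
      by (auto simp: tg_diff twisted_dV_diff mat_act_diff c'_def)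
    then have "c = twisted_dV M (e + h)"
      by (simp add: twisted_dV_add algebra_simps)
    then show ?thesis
      using cochains_below_tg_add[OF e h(1)] by blast
  qed
qed

lemma exact_twisted_dV_if_eigen_exact:
  fixes M :: "complex^'n^'n"
  assumes "\<And>a v. v \<noteq> 0 \<Longrightarrow> M *v v = a *s v \<Longrightarrow> exact_at Agr (twisted_d (sc a eta)) i"
  shows "exact_at tg (twisted_dV M) i"
proof -
  obtain r n where annihilates: "linear_factors_prod M r n = 0"
    using linear_factors_prod_annihilator by blast
  have coboundary: "c \<in> twisted_dV M ` cochains_below tg i"
    if "c \<in> tg i" "twisted_dV M c = 0" "mat_act (linear_factors_prod M r k) c = 0" for c k
    using that
  proof (induction k arbitrary: c)
    case 0
    then have "c = 0"
      by simp
    then show ?case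
      using zero_cochains_below_tg by force
  next
    case (Suc k)
    show ?case
    proof (rule coboundary_if_kernel_linear_factor[where L = "linear_factors_prod M r k" and a = "r k"])
      show "mat_act ((M - mat (r k)) ** linear_factors_prod M r k) c = 0"
        using Suc.prems(3) by simp
    qed (use Suc.IH Suc.prems(1,2) assms linear_factors_prod_commute in blast)+
  qed
  show ?thesis
    unfolding exact_at_def using coboundary[of _ n] annihilates by auto
qed

lemma cov_deriv_decomposable:
  fixes \<theta> :: "complex^'m \<Rightarrow> complex^'n^'n"
  assumes "lie_rep br \<theta>"
  shows "cov_deriv sc mul d \<theta> (\<chi> k. sc (g$k) eta) = twisted_dV (\<theta> g)"
proof
  fix c :: "'a^'n"
  have "mul eta (\<Sum>l\<in>UNIV. sc (\<theta> g $ j $ l) (c$l))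
      = (\<Sum>k\<in>UNIV. \<Sum>l\<in>UNIV. sc (\<theta> (axis k 1) $ j $ l) (mul (sc (g$k) eta) (c$l)))" for j
  proof -
    have "mul eta (\<Sum>l\<in>UNIV. sc (\<theta> g $ j $ l) (c$l))
        = (\<Sum>l\<in>UNIV. \<Sum>k\<in>UNIV. sc (\<theta> (axis k 1) $ j $ l) (mul (sc (g$k) eta) (c$l)))"
      unfolding lie_rep_expand[OF assms, of g]
      by (simp add: mul_sum_right mul_scale_right mul_scale_left vs.scale_sum_left vs.scale_scale
          mult.commute)
    also have "\<dots> = (\<Sum>k\<in>UNIV. \<Sum>l\<in>UNIV. sc (\<theta> (axis k 1) $ j $ l) (mul (sc (g$k) eta) (c$l)))"
      by (rule sum.swap)
    finally show ?thesis .
  qed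
  then show "cov_deriv sc mul d \<theta> (\<chi> k. sc (g$k) eta) c = twisted_dV (\<theta> g) c"
    by (simp add: cov_deriv_def twisted_dV_def map_vec_def mat_act_def vec_eq_iff)
qed

lemma decomposable_resonance_iff:
  fixes \<theta> :: "complex^'m \<Rightarrow> complex^'n^'n"
  assumes "lie_rep br \<theta>"
  shows "(\<chi> k. sc (g$k) eta) \<in> resonance sc Agr mul d br \<theta> i 1
    \<longleftrightarrow> \<not> exact_at tg (twisted_dV (\<theta> g)) i"
  using decomposable_flat_conn[OF eta_Agr eta_closed] cohom_dim_twisted_dV_eq_0_iff[of "\<theta> g" i]
  by (auto simp: resonance_def cov_deriv_decomposable[OF assms])

lemma decomposable_resonance_if_det_eq_0:
  assumes "lie_rep br \<theta>" "det (\<theta> g) = 0" "0 \<in> resonance1 sc Agr mul d i 1"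
  shows "(\<chi> k. sc (g$k) eta) \<in> resonance sc Agr mul d br \<theta> i 1"
proof -
  have "\<not> exact_at Agr d i"
    using assms(3) resonance1_iff[OF Agr_0 d_0] by (simp add: twisted_d_0)
  then show ?thesis
    using decomposable_resonance_iff[OF assms(1)] not_exact_twisted_dV_if_det_eq_0[OF assms(2)]
    by blast
qed

lemma decomposable_not_resonance:
  assumes "lie_rep br \<theta>"
    and "\<And>a v. v \<noteq> 0 \<Longrightarrow> \<theta> g *v v = a *s v \<Longrightarrow> sc a eta \<notin> resonance1 sc Agr mul d i 1"
  shows "(\<chi> k. sc (g$k) eta) \<notin> resonance sc Agr mul d br \<theta> i 1"
proof -
  have "exact_at tg (twisted_dV (\<theta> g)) i"
  proof (rule exact_twisted_dV_if_eigen_exact)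
    fix a v
    assume "v \<noteq> 0" "\<theta> g *v v = a *s v"
    moreover have "sc a eta \<in> Agr 1" "d (sc a eta) = 0"
      by (rule Agr_scale[OF eta_Agr]) (simp add: d_scale eta_closed)
    ultimately show "exact_at Agr (twisted_d (sc a eta)) i"
      using assms(2) resonance1_iff by blast
  qed
  then show ?thesis
    using decomposable_resonance_iff[OF assms(1)] by blast
qed

end

section \<open>Resonance near the trivial connection\<close>

context cdga_alg
begin

lemma decomposable_resonance_near_0_subset_Pi_set:
  fixes \<theta> :: "complex^'m \<Rightarrow> complex^'n^'n"
  assumes "lie_rep br \<theta>" and "isolated_point_of 0 (resonance1 sc Agr mul d i 1)"
  obtains \<delta> where "\<delta> > 0"
    "resonance sc Agr mul d br \<theta> i 1 \<inter> flat_conn1 sc Agr d \<inter> ball 0 \<delta> \<subseteq> Pi_set sc Agr d \<theta>"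
proof -
  obtain U where "open U" "0 \<in> U" and U: "resonance1 sc Agr mul d i 1 \<inter> U \<subseteq> {0}"
    using assms(2) unfolding isolated_point_of_def by blast
  then obtain \<epsilon> where "\<epsilon> > 0" "ball 0 \<epsilon> \<subseteq> U"
    using open_contains_ball by blast
  then have nonresonant: "e = 0" if "e \<in> resonance1 sc Agr mul d i 1" "norm e < \<epsilon>" for e
    using U that by (auto simp: dist_norm)
  obtain L where "L \<ge> 0" and bound: "\<And>e g a v. \<theta> g *v v = a *s v \<Longrightarrow> v \<noteq> 0
      \<Longrightarrow> norm (sc a e) \<le> L * norm ((\<chi> k. sc (g$k) e) :: 'a^'m)"
    using norm_eigenvalue_scale_le[OF assms(1)] by blast
  define \<delta> where "\<delta> = \<epsilon> / (L + 1)"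
  have "L * \<delta> < \<epsilon>"
    using \<open>\<epsilon> > 0\<close> \<open>L \<ge> 0\<close> by (simp add: \<delta>_def field_simps)
  have near: "w \<in> Pi_set sc Agr d \<theta>"
    if w: "w \<in> resonance sc Agr mul d br \<theta> i 1" "w \<in> flat_conn1 sc Agr d" "norm w < \<delta>" for w
  proof -
    obtain e g where e: "e \<in> Agr 1" "d e = 0" and w_eq: "w = (\<chi> k. sc (g$k) e)"
      using w(2) unfolding flat_conn1_def by blast
    interpret cdga_closed_form sc Agr mul d e
      by unfold_locales (fact e)+
    consider "det (\<theta> g) = 0" | "e = 0" | "det (\<theta> g) \<noteq> 0" "e \<noteq> 0"
      by blast
    then show ?thesis
    proof cases
      case 1
      then show ?thesis
        unfolding Pi_set_def w_eq using e by (intro CollectI exI[of _ e] exI[of _ g]) simp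
    next
      case 2
      then have "w = (\<chi> k. sc (0$k) e)"
        using w_eq by (simp add: vec_eq_iff)
      moreover have "det (\<theta> 0) = 0"
        using det_0 by (simp add: lie_rep_0[OF assms(1)] del: det_0)
      ultimately show ?thesis
        unfolding Pi_set_def using e by (intro CollectI exI[of _ e] exI[of _ "0::complex^'m"]) simp
    next
      case 3
      have "sc a e \<notin> resonance1 sc Agr mul d i 1" if "v \<noteq> 0" "\<theta> g *v v = a *s v" for a v
      proof
        assume resonant: "sc a e \<in> resonance1 sc Agr mul d i 1"
        have "a \<noteq> 0"
        proof
          assume "a = 0"
          then have "\<theta> g *v v = 0"
            using that(2) by simp
          then show False
            using 3(1) that(1) det_eq_0_iff_nontrivial_kernel by blast
        qed
        then have "sc a e \<noteq> 0"
          using 3(2) by (simp add: vs.scale_eq_0_iff)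
        have "norm (sc a e) \<le> L * norm w"
          using bound[OF that(2,1), of e] by (simp add: w_eq)
        also have "\<dots> \<le> L * \<delta>"
          using w(3) \<open>L \<ge> 0\<close> by (simp add: mult_left_mono)
        finally have "norm (sc a e) < \<epsilon>"
          using \<open>L * \<delta> < \<epsilon>\<close> by linarith
        then show False
          using nonresonant resonant \<open>sc a e \<noteq> 0\<close> by blast
      qed
      then have "w \<notin> resonance sc Agr mul d br \<theta> i 1"
        unfolding w_eq by (rule decomposable_not_resonance[OF assms(1)])
      then show ?thesis
        using w(1) by blast
    qed
  qed
  show thesis
  proof (rule that)
    show "\<delta> > 0"
      using \<open>\<epsilon> > 0\<close> \<open>L \<ge> 0\<close> by (simp add: \<delta>_def)
    show "resonance sc Agr mul d br \<theta> i 1 \<inter> flat_conn1 sc Agr d \<inter> ball 0 \<delta> \<subseteq> Pi_set sc Agr d \<theta>"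
      using near by (auto simp: dist_norm)
  qed
qed

lemma Pi_set_subset_resonance:
  assumes "lie_rep br \<theta>" "0 \<in> resonance1 sc Agr mul d i 1"
  shows "Pi_set sc Agr d \<theta> \<subseteq> resonance sc Agr mul d br \<theta> i 1"
proof
  fix w
  assume "w \<in> Pi_set sc Agr d \<theta>"
  then obtain e g where e: "e \<in> Agr 1" "d e = 0" and "det (\<theta> g) = 0"
    and w_eq: "w = (\<chi> k. sc (g$k) e)"
    unfolding Pi_set_def by blast
  interpret cdga_closed_form sc Agr mul d e
    by unfold_locales (fact e)+
  show "w \<in> resonance sc Agr mul d br \<theta> i 1"
    unfolding w_eq by (rule decomposable_resonance_if_det_eq_0[OF assms(1) \<open>det (\<theta> g) = 0\<close> assms(2)])
qed

end

theorem corollary2p5: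
  fixes sc :: "complex \<Rightarrow> 'a::euclidean_space \<Rightarrow> 'a"
    and Agr :: "nat \<Rightarrow> 'a set"
    and mul :: "'a \<Rightarrow> 'a \<Rightarrow> 'a" and one :: 'a and d :: "'a \<Rightarrow> 'a"
    and br :: "complex^'m \<Rightarrow> complex^'m \<Rightarrow> complex^'m"
    and \<theta> :: "complex^'m \<Rightarrow> complex^'n^'n"
    and i :: nat
  assumes "connected_cdga sc Agr mul one d"
    and "lie_algebra br"
    and "lie_rep br \<theta>"
    and "isolated_point_of 0 (resonance1 sc Agr mul d i 1)"
    and "germ_eq (flat_conn sc Agr mul d br) (flat_conn1 sc Agr d) 0"
  shows "germ_eq (resonance sc Agr mul d br \<theta> i 1) (Pi_set sc Agr d \<theta>) 0"
proof -
  have "cdga sc Agr mul one d"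
    using assms(1) by (simp add: connected_cdga_def)
  then interpret cdga_alg sc Agr mul d
    by (rule cdga_alg_if_cdga)
  obtain \<delta> where "\<delta> > 0" and near_0:
      "resonance sc Agr mul d br \<theta> i 1 \<inter> flat_conn1 sc Agr d \<inter> ball 0 \<delta> \<subseteq> Pi_set sc Agr d \<theta>"
    using decomposable_resonance_near_0_subset_Pi_set[OF assms(3,4)] by blast
  obtain U where U: "open U" "0 \<in> U"
      "flat_conn sc Agr mul d br \<inter> U = flat_conn1 sc Agr d \<inter> U"
    using assms(5) unfolding germ_eq_def by blast
  have "resonance sc Agr mul d br \<theta> i 1 \<inter> (U \<inter> ball 0 \<delta>) \<subseteq> Pi_set sc Agr d \<theta>"
  proof
    fix w
    assume w: "w \<in> resonance sc Agr mul d br \<theta> i 1 \<inter> (U \<inter> ball 0 \<delta>)"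
    then have "w \<in> flat_conn sc Agr mul d br \<inter> U"
      by (simp add: resonance_def)
    then have "w \<in> flat_conn1 sc Agr d"
      unfolding U(3) by simp
    then show "w \<in> Pi_set sc Agr d \<theta>"
      using w near_0 by blast
  qed
  moreover have "Pi_set sc Agr d \<theta> \<subseteq> resonance sc Agr mul d br \<theta> i 1"
    using Pi_set_subset_resonance[OF assms(3)] assms(4) unfolding isolated_point_of_def by blast
  moreover have "open (U \<inter> ball 0 \<delta>)" "0 \<in> U \<inter> ball 0 \<delta>"
    using U(1,2) \<open>\<delta> > 0\<close> by auto
  ultimately show ?thesis
    unfolding germ_eq_def by blast
qed

end
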